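(* Assume $q_*(y)>0$ if and only if $\mathrm{numK}(y)=0$. Let $T>0$. Then for every $t\in[0,T)$ and every $y\in\mathcal{Y}$, $$R^\gets_t(y):=\sum_{y'\neq y}R^\gets_t(y',y)=\sum_{y'\neq y}R^\to(y,y')\,\frac{q^\gets_t(y')}{q^\gets_t(y)}\;\le\;\frac{\mathrm{numK}(y)\cdot K}{e^{T-t}-1}.$$
   Context: Fix integers $K\ge2$, $d\ge1$ and $\mathcal{Y}=\{1,\dots,K\}^d$; the symbol $K$ is the mask token. For $y\in\mathcal{Y}$, $\mathrm{numK}(y)=\#\{i: y_i=K\}$. The masked forward process $(\mathbf{y}^\to_t)_{t\ge0}$ is the time-homogeneous continuous-time Markov chain on $\mathcal{Y}$ with $\mathbf{y}^\to_0\sim q_*$ and rate function $R^\to(y,y')$ (rate of jumping from $y'$ to $y$): $R^\to(y,y')=1$ if $y$ and $y'$ differ in exactly one coordinate $i$ and $y_i=K$; $R^\to(y,y)=-(d-\mathrm{numK}(y))$; $0$ otherwise. Its marginals are $q^\to_t$. For $T>0$ the reverse marginals are $q^\gets_t:=q^\to_{T-t}$, $t\in[0,T)$, and $R^\gets_t(y',y):=R^\to(y,y')q^\gets_t(y')/q^\gets_t(y)$ for $y'\neq y$ (under the hypothesis, $q^\to_s(y)>0$ for all $y$ and $s>0$). *)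

theory Defs
  imports "HOL-Analysis.Analysis" "HOL-Library.FuncSet"
begin

text \<open>State space Y = {1..K}^d, states as functions on {0..<d} (extensional, undefined outside).\<close>
definition states :: "nat \<Rightarrow> nat \<Rightarrow> (nat \<Rightarrow> nat) set" where
  "states K d = {0..<d} \<rightarrow>\<^sub>E {1..K}"

definition numK :: "nat \<Rightarrow> nat \<Rightarrow> (nat \<Rightarrow> nat) \<Rightarrow> nat" where
  "numK K d y = card {i. i < d \<and> y i = K}"

text \<open>Forward rate R(y, y'): rate of jumping from y' to y.\<close>
definition Rfwd :: "nat \<Rightarrow> nat \<Rightarrow> (nat \<Rightarrow> nat) \<Rightarrow> (nat \<Rightarrow> nat) \<Rightarrow> real" where
  "Rfwd K d y y' =
     (if (\<exists>i<d. y i = K \<and> y' i \<noteq> K \<and> (\<forall>j<d. j \<noteq> i \<longrightarrow> y j = y' j)) then 1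
      else if y = y' then - (real d - real (numK K d y))
      else 0)"

definition gen :: "nat \<Rightarrow> nat \<Rightarrow> ((nat \<Rightarrow> nat) \<Rightarrow> real) \<Rightarrow> ((nat \<Rightarrow> nat) \<Rightarrow> real)" where
  "gen K d q = (\<lambda>y. \<Sum>y'\<in>states K d. Rfwd K d y y' * q y')"

text \<open>Forward marginals q_t = exp(t L) q_0 of the time-homogeneous CTMC (finite state space).\<close>
definition qfwd :: "nat \<Rightarrow> nat \<Rightarrow> ((nat \<Rightarrow> nat) \<Rightarrow> real) \<Rightarrow> real \<Rightarrow> (nat \<Rightarrow> nat) \<Rightarrow> real" where
  "qfwd K d q0 t y = (\<Sum>n. t ^ n / fact n * ((gen K d ^^ n) q0) y)"

definition qrev :: "nat \<Rightarrow> nat \<Rightarrow> ((nat \<Rightarrow> nat) \<Rightarrow> real) \<Rightarrow> real \<Rightarrow> real \<Rightarrow> (nat \<Rightarrow> nat) \<Rightarrow> real" where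
  "qrev K d q0 T t y = qfwd K d q0 (T - t) y"

definition Rrev :: "nat \<Rightarrow> nat \<Rightarrow> ((nat \<Rightarrow> nat) \<Rightarrow> real) \<Rightarrow> real \<Rightarrow> real \<Rightarrow> (nat \<Rightarrow> nat) \<Rightarrow> (nat \<Rightarrow> nat) \<Rightarrow> real" where
  "Rrev K d q0 T t y' y = Rfwd K d y y' * qrev K d q0 T t y' / qrev K d q0 T t y"

end

theory Submission
  imports Defs
begin

text \<open>Write \<open>L\<close> for the generator, \<open>U\<close> for its off-diagonal part and \<open>N\<close> for
multiplication by \<open>numK\<close>. Every forward jump masks exactly one coordinate, so \<open>numK\<close>
drops by one along every reverse jump; this gives the commutation relations
\<open>N L = L N + U\<close> and \<open>U L = (L - 1) U\<close>. Iterating them,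
\<open>N L\<^sup>n = L\<^sup>n N + (\<Sum>k<n. (n choose k) U L\<^sup>k)\<close>. Since \<open>N q\<^sub>* = 0\<close>,
summing the exponential series yields \<open>N q\<^sub>s = (e\<^sup>s - 1) U q\<^sub>s\<close>, and
\<open>U q\<^sub>s (y) / q\<^sub>s (y)\<close> is exactly the total reverse rate at \<open>y\<close>. So the bound holds
even without the factor \<open>K\<close>, and of the hypotheses on \<open>q\<^sub>*\<close> only \<open>N q\<^sub>* = 0\<close> is used.\<close>

lemma finite_states: "finite (states K d)"
  unfolding states_def by (simp add: finite_PiE)

definition gen_off :: "nat \<Rightarrow> nat \<Rightarrow> ((nat \<Rightarrow> nat) \<Rightarrow> real) \<Rightarrow> ((nat \<Rightarrow> nat) \<Rightarrow> real)" where
  "gen_off K d f = (\<lambda>y. \<Sum>y'\<in>states K d - {y}. Rfwd K d y y' * f y')"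

lemma Rfwd_diag: "Rfwd K d y y = real (numK K d y) - real d"
  unfolding Rfwd_def by auto

lemma gen_eq_gen_off_plus_diag:
  assumes "y \<in> states K d"
  shows "gen K d f y = gen_off K d f y + (real (numK K d y) - real d) * f y"
  unfolding gen_def gen_off_def sum.remove[OF finite_states assms] Rfwd_diag by simp

lemma numK_eq_Suc_if_Rfwd_nonzero:
  assumes "y' \<noteq> y" "Rfwd K d y y' \<noteq> 0"
  shows "numK K d y = Suc (numK K d y')"
proof -
  from assms obtain i where i: "i < d" "y i = K" "y' i \<noteq> K" "\<forall>j<d. j \<noteq> i \<longrightarrow> y j = y' j"
    unfolding Rfwd_def by (auto split: if_splits)
  then have "{j. j < d \<and> y j = K} = insert i {j. j < d \<and> y' j = K}"
    by auto
  moreover have "i \<notin> {j. j < d \<and> y' j = K}"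
    using i by auto
  ultimately show ?thesis
    unfolding numK_def by simp
qed

lemma Rfwd_mult_numK:
  assumes "y' \<noteq> y"
  shows "Rfwd K d y y' * real (numK K d y) = Rfwd K d y y' * (real (numK K d y') + 1)"
  using numK_eq_Suc_if_Rfwd_nonzero[OF assms] by (cases "Rfwd K d y y' = 0") auto

lemma gen_off_gen:
  assumes y: "y \<in> states K d"
  shows "gen_off K d (gen K d f) y = gen K d (gen_off K d f) y - gen_off K d f y"
proof -
  have "Rfwd K d y y' * gen K d f y' =
      Rfwd K d y y' * gen_off K d f y' + (real (numK K d y) - real d - 1) * (Rfwd K d y y' * f y')"
    if "y' \<in> states K d - {y}" for y'
    using that Rfwd_mult_numK[of y' y K d]
    by (simp add: gen_eq_gen_off_plus_diag algebra_simps)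
  then have "gen_off K d (gen K d f) y =
      gen_off K d (gen_off K d f) y + (real (numK K d y) - real d - 1) * gen_off K d f y"
    unfolding gen_off_def by (simp add: sum.distrib sum_distrib_left)
  then show ?thesis
    using gen_eq_gen_off_plus_diag[OF y, of "gen_off K d f"] by (simp add: algebra_simps)
qed

lemma numK_mult_gen:
  assumes y: "y \<in> states K d"
  shows "real (numK K d y) * gen K d f y = gen K d (\<lambda>z. real (numK K d z) * f z) y + gen_off K d f y"
proof -
  have "real (numK K d y) * (Rfwd K d y y' * f y') =
      Rfwd K d y y' * (real (numK K d y') * f y') + Rfwd K d y y' * f y'"
    if "y' \<in> states K d - {y}" for y'
    using that Rfwd_mult_numK[of y' y K d] by (simp add: algebra_simps)
  then have "real (numK K d y) * gen_off K d f y =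
      gen_off K d (\<lambda>z. real (numK K d z) * f z) y + gen_off K d f y"
    unfolding gen_off_def sum_distrib_left sum.distrib[symmetric] by (rule sum.cong[OF refl])
  then show ?thesis
    using y by (simp add: gen_eq_gen_off_plus_diag algebra_simps)
qed

lemma gen_cong:
  assumes "\<And>z. z \<in> states K d \<Longrightarrow> f z = g z"
  shows "gen K d f y = gen K d g y"
  unfolding gen_def using assms by simp

lemma gen_sum:
  "gen K d (\<lambda>z. \<Sum>k\<in>A. c k * f k z) y = (\<Sum>k\<in>A. c k * gen K d (f k) y)"
  unfolding gen_def by (simp add: sum_distrib_left sum.swap[of _ A] algebra_simps)

lemma binomial_recurrence_sum:
  fixes b :: "nat \<Rightarrow> real"
  shows "(\<Sum>k<n. real (n choose k) * (b (Suc k) + b k)) + b n = (\<Sum>k<Suc n. real (Suc n choose k) * b k)"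
proof -
  have "(\<Sum>k<Suc n. real (Suc n choose k) * b k) = b 0 + (\<Sum>k<n. real (Suc n choose Suc k) * b (Suc k))"
    by (subst sum.lessThan_Suc_shift) simp
  also have "\<dots> = b 0 + (\<Sum>k<n. real (n choose Suc k) * b (Suc k)) + (\<Sum>k<n. real (n choose k) * b (Suc k))"
    by (simp add: sum.distrib algebra_simps)
  also have "b 0 + (\<Sum>k<n. real (n choose Suc k) * b (Suc k)) = (\<Sum>k<Suc n. real (n choose k) * b k)"
    by (subst sum.lessThan_Suc_shift) simp
  also have "\<dots> = (\<Sum>k<n. real (n choose k) * b k) + b n"
    by simp
  finally show ?thesis
    by (simp add: sum.distrib algebra_simps)
qed

lemma numK_mult_gen_pow:
  assumes q0: "\<And>z. z \<in> states K d \<Longrightarrow> real (numK K d z) * q0 z = 0"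
    and y: "y \<in> states K d"
  shows "real (numK K d y) * (gen K d ^^ n) q0 y =
    (\<Sum>k<n. real (n choose k) * gen_off K d ((gen K d ^^ k) q0) y)"
  using y
proof (induction n arbitrary: y)
  case 0
  then show ?case using q0 by simp
next
  case (Suc n)
  define b where "b k = gen_off K d ((gen K d ^^ k) q0)" for k
  have "real (numK K d y) * (gen K d ^^ Suc n) q0 y =
      gen K d (\<lambda>z. real (numK K d z) * (gen K d ^^ n) q0 z) y + b n y"
    using numK_mult_gen[OF Suc.prems] by (simp add: b_def)
  also have "gen K d (\<lambda>z. real (numK K d z) * (gen K d ^^ n) q0 z) y =
      gen K d (\<lambda>z. \<Sum>k<n. real (n choose k) * b k z) y"
    using Suc.IH by (intro gen_cong) (simp add: b_def)
  also have "\<dots> = (\<Sum>k<n. real (n choose k) * (b (Suc k) y + b k y))"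
    using gen_off_gen[OF Suc.prems] by (simp add: gen_sum b_def)
  finally show ?case
    using binomial_recurrence_sum[of n "\<lambda>k. b k y"] by (simp add: b_def)
qed

lemma Rfwd_abs_le: "\<bar>Rfwd K d y y'\<bar> \<le> real d"
proof -
  have "numK K d y \<le> d"
    unfolding numK_def by (rule order.trans[OF card_mono[of "{..<d}"]]) auto
  then show ?thesis
    unfolding Rfwd_def by auto
qed

lemma gen_pow_abs_le:
  assumes "y \<in> states K d"
  shows "\<bar>(gen K d ^^ n) f y\<bar> \<le> (\<Sum>z\<in>states K d. \<bar>f z\<bar>) * (real (card (states K d)) * real d) ^ n"
  using assms
proof (induction n arbitrary: y)
  case 0
  then show ?case
    using member_le_sum[of y "states K d" "\<lambda>z. \<bar>f z\<bar>"] finite_states by simp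
next
  case (Suc n)
  let ?B = "(\<Sum>z\<in>states K d. \<bar>f z\<bar>) * (real (card (states K d)) * real d) ^ n"
  have "\<bar>(gen K d ^^ Suc n) f y\<bar> \<le> (\<Sum>y'\<in>states K d. \<bar>Rfwd K d y y'\<bar> * \<bar>(gen K d ^^ n) f y'\<bar>)"
    using sum_abs[of "\<lambda>y'. Rfwd K d y y' * (gen K d ^^ n) f y'" "states K d"]
    by (simp add: gen_def abs_mult)
  also have "\<dots> \<le> (\<Sum>y'\<in>states K d. real d * ?B)"
    using Suc.IH Rfwd_abs_le by (intro sum_mono mult_mono) auto
  finally show ?case
    by (simp add: algebra_simps)
qed

lemma summable_exp_series_if_geometric_bound:
  fixes c :: "nat \<Rightarrow> real"
  assumes "\<And>n. \<bar>c n\<bar> \<le> B * C ^ n"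
  shows "summable (\<lambda>n. \<bar>s ^ n / fact n * c n\<bar>)"
proof (rule summable_comparison_test')
  show "summable (\<lambda>n. B * ((\<bar>s\<bar> * C) ^ n / fact n))"
    using summable_exp[of "\<bar>s\<bar> * C"] by (intro summable_mult) (simp add: field_simps)
next
  fix n
  have "\<bar>s\<bar> ^ n / fact n * \<bar>c n\<bar> \<le> \<bar>s\<bar> ^ n / fact n * (B * C ^ n)"
    using assms by (intro mult_left_mono) auto
  then show "norm \<bar>s ^ n / fact n * c n\<bar> \<le> B * ((\<bar>s\<bar> * C) ^ n / fact n)"
    by (simp add: abs_mult power_abs power_mult_distrib field_simps)
qed

lemma summable_qfwd_series:
  assumes "y \<in> states K d"
  shows "summable (\<lambda>n. \<bar>s ^ n / fact n * (gen K d ^^ n) q0 y\<bar>)"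
  using gen_pow_abs_le[OF assms] by (rule summable_exp_series_if_geometric_bound)

lemma gen_off_qfwd:
  shows "gen_off K d (qfwd K d q0 s) y = (\<Sum>n. s ^ n / fact n * gen_off K d ((gen K d ^^ n) q0) y)"
    and "summable (\<lambda>n. \<bar>s ^ n / fact n * gen_off K d ((gen K d ^^ n) q0) y\<bar>)"
proof -
  let ?S = "states K d - {y}"
  let ?a = "\<lambda>n y'. s ^ n / fact n * (gen K d ^^ n) q0 y'"
  have summable_a: "summable (\<lambda>n. ?a n y')" if "y' \<in> ?S" for y'
    using that summable_qfwd_series by (blast intro: summable_rabs_cancel)
  have coefficient: "s ^ n / fact n * gen_off K d ((gen K d ^^ n) q0) y = (\<Sum>y'\<in>?S. Rfwd K d y y' * ?a n y')" for n
    unfolding gen_off_def by (simp add: sum_distrib_left algebra_simps)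
  have "gen_off K d (qfwd K d q0 s) y = (\<Sum>y'\<in>?S. \<Sum>n. Rfwd K d y y' * ?a n y')"
    unfolding gen_off_def qfwd_def using summable_a by (intro sum.cong refl suminf_mult[symmetric]) auto
  also have "\<dots> = (\<Sum>n. \<Sum>y'\<in>?S. Rfwd K d y y' * ?a n y')"
    using summable_a by (intro suminf_sum[symmetric] summable_mult) auto
  finally show "gen_off K d (qfwd K d q0 s) y = (\<Sum>n. s ^ n / fact n * gen_off K d ((gen K d ^^ n) q0) y)"
    unfolding coefficient .
  show "summable (\<lambda>n. \<bar>s ^ n / fact n * gen_off K d ((gen K d ^^ n) q0) y\<bar>)"
  proof (rule summable_comparison_test')
    show "summable (\<lambda>n. \<Sum>y'\<in>?S. \<bar>Rfwd K d y y'\<bar> * \<bar>?a n y'\<bar>)"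
      using summable_qfwd_series by (intro summable_sum summable_mult) auto
  next
    fix n
    show "norm \<bar>s ^ n / fact n * gen_off K d ((gen K d ^^ n) q0) y\<bar> \<le> (\<Sum>y'\<in>?S. \<bar>Rfwd K d y y'\<bar> * \<bar>?a n y'\<bar>)"
      unfolding coefficient using sum_abs[of "\<lambda>y'. Rfwd K d y y' * ?a n y'" ?S] by (simp add: abs_mult)
  qed
qed

lemma exp_minus_one_sums:
  fixes s :: real
  shows "(\<lambda>n. if n = 0 then 0 else s ^ n / fact n) sums (exp s - 1)"
    and "summable (\<lambda>n. \<bar>if n = 0 then 0 else s ^ n / fact n\<bar>)"
proof -
  have "(\<lambda>n. s ^ n / fact n - (if n = 0 then 1 else 0)) sums (exp s - 1)"
    using sums_diff[OF exp_converges[of s] sums_single[of 0 "\<lambda>_. 1::real"]]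
    by (simp add: divide_inverse mult.commute)
  then show "(\<lambda>n. if n = 0 then 0 else s ^ n / fact n) sums (exp s - 1)"
    by (simp add: if_distrib cong: if_cong)
  show "summable (\<lambda>n. \<bar>if n = 0 then 0 else s ^ n / fact n\<bar>)"
    using summable_exp[of "\<bar>s\<bar>"]
    by (rule summable_comparison_test'[where N=0]) (simp add: power_abs field_simps)
qed

lemma numK_mult_qfwd:
  assumes q0: "\<And>z. z \<in> states K d \<Longrightarrow> real (numK K d z) * q0 z = 0"
    and y: "y \<in> states K d"
  shows "real (numK K d y) * qfwd K d q0 s y = (exp s - 1) * gen_off K d (qfwd K d q0 s) y"
proof -
  define b where "b n = s ^ n / fact n * gen_off K d ((gen K d ^^ n) q0) y" for n
  define e where "e n = (if n = 0 then 0 else s ^ n / fact n)" for n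
  have Cauchy_term: "(\<Sum>i\<le>n. b i * e (n - i)) = real (numK K d y) * (s ^ n / fact n * (gen K d ^^ n) q0 y)"
    for n
  proof -
    have "b i * e (n - i) = s ^ n / fact n * (real (n choose i) * gen_off K d ((gen K d ^^ i) q0) y)"
      if "i < n" for i
      using that binomial_fact[of i n, where 'a=real]
      by (simp add: b_def e_def field_simps flip: power_add)
    then have "(\<Sum>i\<le>n. b i * e (n - i)) =
        s ^ n / fact n * (\<Sum>i<n. real (n choose i) * gen_off K d ((gen K d ^^ i) q0) y)"
      by (simp add: e_def sum_distrib_left flip: lessThan_Suc_atMost)
    then show ?thesis
      using numK_mult_gen_pow[OF q0 y] by (simp add: mult.left_commute)
  qed
  have "gen_off K d (qfwd K d q0 s) y * (exp s - 1) = (\<Sum>n. b n) * (\<Sum>n. e n)"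
    using gen_off_qfwd(1) exp_minus_one_sums(1)[THEN sums_unique] by (simp add: b_def e_def)
  also have "\<dots> = (\<Sum>n. \<Sum>i\<le>n. b i * e (n - i))"
    using gen_off_qfwd(2) exp_minus_one_sums(2) unfolding b_def e_def by (intro Cauchy_product) auto
  also have "\<dots> = (\<Sum>n. real (numK K d y) * (s ^ n / fact n * (gen K d ^^ n) q0 y))"
    unfolding Cauchy_term ..
  also have "\<dots> = real (numK K d y) * qfwd K d q0 s y"
    unfolding qfwd_def by (rule suminf_mult, rule summable_rabs_cancel, rule summable_qfwd_series[OF y])
  finally show ?thesis
    by (simp add: mult.commute)
qed

theorem lemma3:
  fixes K d :: nat and qstar :: "(nat \<Rightarrow> nat) \<Rightarrow> real" and T :: real
  assumes "K \<ge> 2" and "d \<ge> 1"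
    and "\<forall>y\<in>states K d. qstar y \<ge> 0"
    and "(\<Sum>y\<in>states K d. qstar y) = 1"
    and "\<forall>y\<in>states K d. qstar y > 0 \<longleftrightarrow> numK K d y = 0"
    and "T > 0"
  shows "\<forall>t\<in>{0..<T}. \<forall>y\<in>states K d.
           (\<Sum>y'\<in>states K d - {y}. Rrev K d qstar T t y' y) \<le>
             real (numK K d y) * real K / (exp (T - t) - 1)"
proof (intro ballI)
  fix t y assume t: "t \<in> {0..<T}" and y: "y \<in> states K d"
  let ?q = "qfwd K d qstar (T - t)"
  have exp_pos: "exp (T - t) - 1 > 0"
    using t by simp
  have "real (numK K d z) * qstar z = 0" if "z \<in> states K d" for z
    using assms(3,5) that by (cases "numK K d z = 0") force+
  then have identity: "real (numK K d y) * ?q y = (exp (T - t) - 1) * gen_off K d ?q y"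
    using numK_mult_qfwd y by blast
  have "(\<Sum>y'\<in>states K d - {y}. Rrev K d qstar T t y' y) = gen_off K d ?q y / ?q y"
    unfolding Rrev_def qrev_def gen_off_def by (simp add: sum_divide_distrib)
  also have "\<dots> \<le> real (numK K d y) / (exp (T - t) - 1)"
  proof (cases "?q y = 0")
    case False
    then have "gen_off K d ?q y / ?q y = real (numK K d y) / (exp (T - t) - 1)"
      using identity exp_pos by (simp add: field_simps)
    then show ?thesis by simp
  qed (use exp_pos in simp) \<comment> \<open>if \<open>q\<^sub>s (y) = 0\<close>, the ratio is \<open>0\<close> since \<open>x / 0 = 0\<close>\<close>
  also have "\<dots> \<le> real (numK K d y) * real K / (exp (T - t) - 1)"
    using assms(1) exp_pos by (intro divide_right_mono) (auto simp: mult_le_cancel_left1)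
  finally show "(\<Sum>y'\<in>states K d - {y}. Rrev K d qstar T t y' y) \<le>
      real (numK K d y) * real K / (exp (T - t) - 1)" .
qed

end
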